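(* Let $\widetilde\nabla$ be the canonical snm-connection on $\mathbb R^3$ determined by $\mathsf C=\partial_z$, and let $M$ be the rotational surface $\psi(s,t)=(x(s)\cos t,x(s)\sin t,z(s))$, $s\in I$, $t\in\mathbb R$, with $I$ an open interval, $x>0$ and $x'^2+z'^2=1$. If the sectional curvature $K$ of $M$ with respect to $\widetilde\nabla$ is constant, then neither of the functions $2z'-xx'$ and $xz'-x'$ vanishes identically on $I$.
   Context: Let $\langle\cdot,\cdot\rangle$ be the Euclidean metric on $\mathbb R^3$ and $\widetilde\nabla^0$ its Levi-Civita connection (the ordinary directional derivative). Given a smooth vector field $\mathsf C$ on $\mathbb R^3$, the semi-symmetric non-metric connection (snm-connection) determined by $\mathsf C$ is $\widetilde\nabla_XY=\widetilde\nabla^0_XY+\langle \mathsf C,Y\rangle X$. Its curvature tensor is $\widetilde R(X,Y)Z=\widetilde\nabla_X\widetilde\nabla_YZ-\widetilde\nabla_Y\widetilde\nabla_XZ-\widetilde\nabla_{[X,Y]}Z$. For a surface $M$ immersed in $\mathbb R^3$, the induced connection is $\nabla_XY=(\widetilde\nabla_XY)^{\top}$ (tangential component), with curvature tensor $R$ defined by the same formula, and the sectional curvature of $M$ with respect to $\widetilde\nabla$ at $p$ is $K(p)=\frac12\big(\langle R(e_1,e_2)e_2,e_1\rangle+\langle R(e_2,e_1)e_1,e_2\rangle\big)$ for an orthonormal basis $\{e_1,e_2\}$ of $T_pM$. *)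

theory Defs
  imports "HOL-Analysis.Analysis"
begin

text \<open>Fields along a parametrized surface psi : U \<subseteq> R^2 \<rightarrow> R^3 are
  represented as maps (s,t) \<mapsto> vector in R^3.\<close>

type_synonym sfield = "real \<times> real \<Rightarrow> real^3"

definition pd1 :: "sfield \<Rightarrow> sfield" where
  "pd1 Y p = vector_derivative (\<lambda>u. Y (u, snd p)) (at (fst p))"

definition pd2 :: "sfield \<Rightarrow> sfield" where
  "pd2 Y p = vector_derivative (\<lambda>u. Y (fst p, u)) (at (snd p))"

text \<open>Euclidean directional derivative D_W Y (Levi-Civita connection of R^3)
  of a field Y along the surface psi, in the direction of a tangent field W;
  W is expanded in the coordinate frame psi_s, psi_t via the first fundamental form.\<close>
definition dirderiv :: "sfield \<Rightarrow> sfield \<Rightarrow> sfield \<Rightarrow> sfield" where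
  "dirderiv psi W Y p =
     (let Ps = pd1 psi p; Pt = pd2 psi p;
          E = Ps \<bullet> Ps; F = Ps \<bullet> Pt; G = Pt \<bullet> Pt;
          w1 = W p \<bullet> Ps; w2 = W p \<bullet> Pt; D = E * G - F\<^sup>2;
          a = (G * w1 - F * w2) / D; b = (E * w2 - F * w1) / D
      in a *\<^sub>R pd1 Y p + b *\<^sub>R pd2 Y p)"

definition snm_conn :: "sfield \<Rightarrow> (real^3 \<Rightarrow> real^3) \<Rightarrow> sfield \<Rightarrow> sfield \<Rightarrow> sfield" where
  "snm_conn psi C W Y p = dirderiv psi W Y p + (C (psi p) \<bullet> Y p) *\<^sub>R W p"

definition unit_normal :: "sfield \<Rightarrow> sfield" where
  "unit_normal psi p = sgn (cross3 (pd1 psi p) (pd2 psi p))"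

definition tangential :: "sfield \<Rightarrow> sfield \<Rightarrow> sfield" where
  "tangential psi V p = V p - (V p \<bullet> unit_normal psi p) *\<^sub>R unit_normal psi p"

definition ind_conn :: "sfield \<Rightarrow> (real^3 \<Rightarrow> real^3) \<Rightarrow> sfield \<Rightarrow> sfield \<Rightarrow> sfield" where
  "ind_conn psi C W Y = tangential psi (snm_conn psi C W Y)"

definition lie_bracket :: "sfield \<Rightarrow> sfield \<Rightarrow> sfield \<Rightarrow> sfield" where
  "lie_bracket psi X Y p = dirderiv psi X Y p - dirderiv psi Y X p"

definition ind_curv :: "sfield \<Rightarrow> (real^3 \<Rightarrow> real^3) \<Rightarrow> sfield \<Rightarrow> sfield \<Rightarrow> sfield \<Rightarrow> sfield" where
  "ind_curv psi C X Y Z p =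
     ind_conn psi C X (ind_conn psi C Y Z) p - ind_conn psi C Y (ind_conn psi C X Z) p
     - ind_conn psi C (lie_bracket psi X Y) Z p"

definition frame1 :: "sfield \<Rightarrow> sfield" where
  "frame1 psi p = sgn (pd1 psi p)"

definition frame2 :: "sfield \<Rightarrow> sfield" where
  "frame2 psi p = sgn (pd2 psi p - (pd2 psi p \<bullet> frame1 psi p) *\<^sub>R frame1 psi p)"

definition sect_curv :: "sfield \<Rightarrow> (real^3 \<Rightarrow> real^3) \<Rightarrow> real \<times> real \<Rightarrow> real" where
  "sect_curv psi C p =
     (ind_curv psi C (frame1 psi) (frame2 psi) (frame2 psi) p \<bullet> frame1 psi p
      + ind_curv psi C (frame2 psi) (frame1 psi) (frame1 psi) p \<bullet> frame2 psi p) / 2"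

definition rot_surface :: "(real \<Rightarrow> real) \<Rightarrow> (real \<Rightarrow> real) \<Rightarrow> sfield" where
  "rot_surface x z p = vector [x (fst p) * cos (snd p), x (fst p) * sin (snd p), z (fst p)]"

definition partial_z :: "real^3 \<Rightarrow> real^3" where
  "partial_z q = vector [0, 0, 1]"

end

theory Submission imports Defs begin

text \<open>In the orthonormal frame \<open>e\<^sub>1 = \<psi>\<^sub>s\<close>, \<open>e\<^sub>2 = \<psi>\<^sub>t / x\<close> every field whose coordinates depend
  on \<open>s\<close> only is differentiated by a closed formula, and the sectional curvature comes out as
  \<open>K = - x''/x + (z'\<^sup>2 - z'' - x'z'/x)/2\<close>, independent of \<open>t\<close>.
  If \<open>2z' = xx'\<close>, the unit-speed relation and its derivative turn this into
  \<open>K = 1/2 - 3/(4 + x\<^sup>2)\<close>; if \<open>xz' = x'\<close>, into \<open>K = (x\<^sup>2 - 2)/(2(1 + x\<^sup>2)\<^sup>2)\<close>.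
  In both cases \<open>x'\<close> never vanishes, so differentiating the relation \<open>K = c\<close>, cleared of
  denominators, along the profile forces incompatible values of \<open>c\<close>.
  Everything is pointwise.\<close>

lemma vector3_eq_scaleR_basis:
  "(vector [a, b, c] :: real^3) = a *\<^sub>R vector [1,0,0] + b *\<^sub>R vector [0,1,0] + c *\<^sub>R vector [0,0,1]"
  by (simp add: vec_eq_iff forall_3)

lemma has_vector_derivative_vector3:
  assumes "(f1 has_real_derivative d1) (at s)" "(f2 has_real_derivative d2) (at s)"
    "(f3 has_real_derivative d3) (at s)"
  shows "((\<lambda>u. vector [f1 u, f2 u, f3 u] :: real^3) has_vector_derivative vector [d1, d2, d3]) (at s)"
proof -
  have "((\<lambda>u. f1 u *\<^sub>R (vector [1,0,0] :: real^3) + f2 u *\<^sub>R vector [0,1,0] + f3 u *\<^sub>R vector [0,0,1])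
      has_vector_derivative d1 *\<^sub>R vector [1,0,0] + d2 *\<^sub>R vector [0,1,0] + d3 *\<^sub>R vector [0,0,1]) (at s)"
    using assms by (auto intro!: derivative_eq_intros simp: has_real_derivative_iff_has_vector_derivative)
  then show ?thesis
    by (simp only: vector3_eq_scaleR_basis[symmetric])
qed

lemma has_real_derivative_unique_on_open:
  assumes "open I" "s \<in> I" "\<And>u. u \<in> I \<Longrightarrow> f u = g u"
    and "(f has_real_derivative D) (at s)" "(g has_real_derivative E) (at s)"
  shows "D = E"
proof -
  have "(g has_real_derivative D) (at s)"
    by (rule has_field_derivative_transform_within_open[OF assms(4,1,2)]) (simp add: assms(3))
  then show ?thesis
    using assms(5) DERIV_unique by blast
qed

text \<open>\<open>rot_frame_vec x z c d s t\<close> is \<open>c e\<^sub>1 + d e\<^sub>2\<close> at \<open>\<psi>(s,t)\<close>, where \<open>e\<^sub>1 = \<psi>\<^sub>s\<close>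
  and \<open>e\<^sub>2 = \<psi>\<^sub>t / x(s)\<close>; \<open>rot_field\<close> is the field with \<open>s\<close>-dependent coordinates \<open>a, b\<close>.\<close>

definition rot_frame_vec :: "(real \<Rightarrow> real) \<Rightarrow> (real \<Rightarrow> real) \<Rightarrow> real \<Rightarrow> real \<Rightarrow> real \<Rightarrow> real \<Rightarrow> real^3"
  where "rot_frame_vec x z c d s t =
    vector [c * deriv x s * cos t - d * sin t, c * deriv x s * sin t + d * cos t, c * deriv z s]"

definition rot_field :: "(real \<Rightarrow> real) \<Rightarrow> (real \<Rightarrow> real) \<Rightarrow> (real \<Rightarrow> real) \<Rightarrow> (real \<Rightarrow> real) \<Rightarrow> sfield"
  where "rot_field x z a b p = rot_frame_vec x z (a (fst p)) (b (fst p)) (fst p) (snd p)"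

lemma diff_rot_frame_vec:
  "rot_frame_vec x z a b s t - rot_frame_vec x z c d s t = rot_frame_vec x z (a - c) (b - d) s t"
  by (simp add: rot_frame_vec_def vec_eq_iff forall_3 algebra_simps)

locale unit_speed_profile =
  fixes x z :: "real \<Rightarrow> real" and I :: "real set"
  assumes open_I: "open I"
    and smooth_x: "\<And>n s. s \<in> I \<Longrightarrow> ((deriv ^^ n) x) differentiable (at s)"
    and smooth_z: "\<And>n s. s \<in> I \<Longrightarrow> ((deriv ^^ n) z) differentiable (at s)"
    and x_pos: "\<And>s. s \<in> I \<Longrightarrow> x s > 0"
    and unit_speed: "\<And>s. s \<in> I \<Longrightarrow> (deriv x s)\<^sup>2 + (deriv z s)\<^sup>2 = 1"
begin

definition profile_curvature :: "real \<Rightarrow> real" where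
  "profile_curvature s = - (deriv (deriv x) s / x s)
     + ((deriv z s)\<^sup>2 - deriv (deriv z) s - deriv x s * deriv z s / x s) / 2"

lemma has_deriv_x: "s \<in> I \<Longrightarrow> (x has_real_derivative deriv x s) (at s)"
  using smooth_x[of s 0] by (simp add: DERIV_deriv_iff_real_differentiable)

lemma has_deriv_z: "s \<in> I \<Longrightarrow> (z has_real_derivative deriv z s) (at s)"
  using smooth_z[of s 0] by (simp add: DERIV_deriv_iff_real_differentiable)

lemma has_deriv_deriv_x: "s \<in> I \<Longrightarrow> (deriv x has_real_derivative deriv (deriv x) s) (at s)"
  using smooth_x[of s 1] by (simp add: DERIV_deriv_iff_real_differentiable)

lemma has_deriv_deriv_z: "s \<in> I \<Longrightarrow> (deriv z has_real_derivative deriv (deriv z) s) (at s)"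
  using smooth_z[of s 1] by (simp add: DERIV_deriv_iff_real_differentiable)

lemma unit_speed_deriv:
  assumes s: "s \<in> I"
  shows "deriv x s * deriv (deriv x) s + deriv z s * deriv (deriv z) s = 0"
proof -
  have "((\<lambda>u. (deriv x u)\<^sup>2 + (deriv z u)\<^sup>2) has_real_derivative
      2 * deriv x s * deriv (deriv x) s + 2 * deriv z s * deriv (deriv z) s) (at s)"
    using has_deriv_deriv_x[OF s] has_deriv_deriv_z[OF s] by (auto intro!: derivative_eq_intros)
  from has_real_derivative_unique_on_open[OF open_I s _ this DERIV_const[of 1]] unit_speed
  show ?thesis by auto
qed

lemma inner_rot_frame_vec:
  "s \<in> I \<Longrightarrow> rot_frame_vec x z a b s t \<bullet> rot_frame_vec x z c d s t = a * c + b * d"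
  unfolding rot_frame_vec_def
  apply (simp add: inner_vec_def sum_3)
  using unit_speed[of s] sin_cos_squared_add[of t] by algebra

lemma norm_rot_frame_vec:
  "s \<in> I \<Longrightarrow> c\<^sup>2 + d\<^sup>2 = 1 \<Longrightarrow> norm (rot_frame_vec x z c d s t) = 1"
  by (simp add: norm_eq_sqrt_inner inner_rot_frame_vec power2_eq_square)

lemma pd1_rot_surface:
  "s \<in> I \<Longrightarrow> pd1 (rot_surface x z) (s, t) = rot_frame_vec x z 1 0 s t"
  unfolding pd1_def rot_surface_def rot_frame_vec_def
  by (auto intro!: vector_derivative_at has_vector_derivative_vector3 derivative_eq_intros
      has_deriv_x has_deriv_z)

lemma pd2_rot_surface:
  "pd2 (rot_surface x z) (s, t) = x s *\<^sub>R rot_frame_vec x z 0 1 s t"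
proof -
  have "pd2 (rot_surface x z) (s, t) = vector [- x s * sin t, x s * cos t, 0]"
    unfolding pd2_def rot_surface_def
    by (auto intro!: vector_derivative_at has_vector_derivative_vector3 derivative_eq_intros)
  then show ?thesis
    by (simp add: rot_frame_vec_def vec_eq_iff forall_3)
qed

lemma pd1_rot_field:
  assumes s: "s \<in> I" and Y: "\<And>q. fst q \<in> I \<Longrightarrow> Y q = rot_field x z a b q"
    and a: "(a has_real_derivative a') (at s)" and b: "(b has_real_derivative b') (at s)"
  shows "pd1 Y (s, t) = vector [(a' * deriv x s + a s * deriv (deriv x) s) * cos t - b' * sin t,
      (a' * deriv x s + a s * deriv (deriv x) s) * sin t + b' * cos t,
      a' * deriv z s + a s * deriv (deriv z) s]" (is "_ = ?D")
proof -
  have "((\<lambda>u. rot_field x z a b (u, t)) has_vector_derivative ?D) (at s)"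
    unfolding rot_field_def rot_frame_vec_def fst_conv snd_conv
    by (rule has_vector_derivative_vector3)
      (auto intro!: derivative_eq_intros has_deriv_deriv_x has_deriv_deriv_z s a b simp: algebra_simps)
  then have "((\<lambda>u. Y (u, t)) has_vector_derivative ?D) (at s)"
    by (rule has_vector_derivative_transform_within_open[OF _ open_I s]) (simp add: Y)
  then show ?thesis
    unfolding pd1_def by (simp add: vector_derivative_at)
qed

lemma pd2_rot_field:
  assumes s: "s \<in> I" and Y: "\<And>q. fst q \<in> I \<Longrightarrow> Y q = rot_field x z a b q"
  shows "pd2 Y (s, t) = vector [- a s * deriv x s * sin t - b s * cos t,
      a s * deriv x s * cos t - b s * sin t, 0]" (is "_ = ?D")
proof -
  have "((\<lambda>u. rot_field x z a b (s, u)) has_vector_derivative ?D) (at t)"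
    unfolding rot_field_def rot_frame_vec_def fst_conv snd_conv
    by (rule has_vector_derivative_vector3) (auto intro!: derivative_eq_intros simp: algebra_simps)
  moreover have "(\<lambda>u. Y (s, u)) = (\<lambda>u. rot_field x z a b (s, u))"
    using Y s by auto
  ultimately show ?thesis
    unfolding pd2_def by (simp add: vector_derivative_at)
qed

lemma unit_normal_rot_surface:
  assumes s: "s \<in> I"
  shows "unit_normal (rot_surface x z) (s, t) =
    vector [- deriv z s * cos t, - deriv z s * sin t, deriv x s]"
proof -
  let ?N = "vector [- deriv z s * cos t, - deriv z s * sin t, deriv x s] :: real^3"
  have cross: "cross3 (pd1 (rot_surface x z) (s, t)) (pd2 (rot_surface x z) (s, t)) = x s *\<^sub>R ?N"
    unfolding pd1_rot_surface[OF s] pd2_rot_surface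
    apply (simp add: rot_frame_vec_def cross3_def vec_eq_iff forall_3)
    using sin_cos_squared_add[of t] by algebra
  have "?N \<bullet> ?N = 1"
    apply (simp add: inner_vec_def sum_3)
    using unit_speed[OF s] sin_cos_squared_add[of t] by algebra
  then have "norm ?N = 1"
    by (simp add: norm_eq_sqrt_inner)
  then show ?thesis
    unfolding unit_normal_def cross using x_pos[OF s] by (simp add: sgn_div_norm)
qed

lemma dirderiv_rot_surface:
  assumes s: "s \<in> I" and W: "W (s, t) = rot_frame_vec x z c d s t"
  shows "dirderiv (rot_surface x z) W Y (s, t) = c *\<^sub>R pd1 Y (s, t) + (d / x s) *\<^sub>R pd2 Y (s, t)"
proof -
  have "x s \<noteq> 0"
    using x_pos[OF s] by simp
  then show ?thesis
    by (simp add: dirderiv_def Let_def pd1_rot_surface[OF s] pd2_rot_surface W inner_rot_frame_vec[OF s]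
        power2_eq_square)
qed

lemma ind_conn_rot_field:
  assumes s: "s \<in> I" and Y: "\<And>q. fst q \<in> I \<Longrightarrow> Y q = rot_field x z a b q"
    and a: "(a has_real_derivative a') (at s)" and b: "(b has_real_derivative b') (at s)"
    and W: "W (s, t) = rot_frame_vec x z c d s t"
  shows "ind_conn (rot_surface x z) partial_z W Y (s, t) = rot_frame_vec x z
    (c * a' - d * b s * deriv x s / x s + a s * deriv z s * c)
    (c * b' + d * a s * deriv x s / x s + a s * deriv z s * d) s t"
proof -
  \<comment> \<open>With \<open>1/x\<close> replaced by \<open>\<xi>\<close> subject to \<open>x \<xi> = 1\<close>, the identity is polynomial.\<close>
  define xi where "xi = 1 / x s"
  have xi: "x s * xi = 1"
    using x_pos[OF s] by (simp add: xi_def)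
  have div_xi: "\<And>e. e / x s = e * xi"
    by (simp add: xi_def)
  show ?thesis
    unfolding ind_conn_def tangential_def snm_conn_def dirderiv_rot_surface[where W=W and Y=Y, OF s W]
      unit_normal_rot_surface[OF s] Y[of "(s, t)", simplified, OF s] W partial_z_def div_xi
    apply (simp add: pd1_rot_field[OF s Y a b] pd2_rot_field[OF s Y] rot_field_def rot_frame_vec_def
        vec_eq_iff forall_3 inner_vec_def sum_3)
    using unit_speed[OF s] sin_cos_squared_add[of t] unit_speed_deriv[OF s] xi by algebra
qed

lemma frame1_rot_surface:
  "s \<in> I \<Longrightarrow> frame1 (rot_surface x z) (s, t) = rot_frame_vec x z 1 0 s t"
  by (simp add: frame1_def pd1_rot_surface sgn_div_norm norm_rot_frame_vec)

lemma frame2_rot_surface: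
  assumes s: "s \<in> I"
  shows "frame2 (rot_surface x z) (s, t) = rot_frame_vec x z 0 1 s t"
proof -
  have "pd2 (rot_surface x z) (s, t) - (pd2 (rot_surface x z) (s, t) \<bullet> frame1 (rot_surface x z) (s, t))
      *\<^sub>R frame1 (rot_surface x z) (s, t) = x s *\<^sub>R rot_frame_vec x z 0 1 s t"
    by (simp add: pd2_rot_surface frame1_rot_surface[OF s] inner_rot_frame_vec[OF s])
  then show ?thesis
    using x_pos[OF s] by (simp add: frame2_def sgn_div_norm norm_rot_frame_vec[OF s])
qed

lemma frame1_eq_rot_field:
  "fst q \<in> I \<Longrightarrow> frame1 (rot_surface x z) q = rot_field x z (\<lambda>_. 1) (\<lambda>_. 0) q"
  by (cases q) (simp add: frame1_rot_surface rot_field_def)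

lemma frame2_eq_rot_field:
  "fst q \<in> I \<Longrightarrow> frame2 (rot_surface x z) q = rot_field x z (\<lambda>_. 0) (\<lambda>_. 1) q"
  by (cases q) (simp add: frame2_rot_surface rot_field_def)

lemma ind_conn_frame1_frame1:
  "fst q \<in> I \<Longrightarrow> ind_conn (rot_surface x z) partial_z (frame1 (rot_surface x z)) (frame1 (rot_surface x z)) q
    = rot_field x z (deriv z) (\<lambda>_. 0) q"
  apply (cases q)
  apply (simp add: rot_field_def)
  apply (subst ind_conn_rot_field[where a="\<lambda>_. 1" and b="\<lambda>_. 0" and a'=0 and b'=0 and c=1 and d=0])
  by (auto simp: frame1_eq_rot_field frame1_rot_surface rot_field_def)

lemma ind_conn_frame1_frame2:
  "fst q \<in> I \<Longrightarrow> ind_conn (rot_surface x z) partial_z (frame1 (rot_surface x z)) (frame2 (rot_surface x z)) q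
    = rot_field x z (\<lambda>_. 0) (\<lambda>_. 0) q"
  apply (cases q)
  apply (simp add: rot_field_def)
  apply (subst ind_conn_rot_field[where a="\<lambda>_. 0" and b="\<lambda>_. 1" and a'=0 and b'=0 and c=1 and d=0])
  by (auto simp: frame2_eq_rot_field frame1_rot_surface rot_field_def)

lemma ind_conn_frame2_frame1:
  "fst q \<in> I \<Longrightarrow> ind_conn (rot_surface x z) partial_z (frame2 (rot_surface x z)) (frame1 (rot_surface x z)) q
    = rot_field x z (\<lambda>_. 0) (\<lambda>u. deriv x u / x u + deriv z u) q"
  apply (cases q)
  apply (simp add: rot_field_def)
  apply (subst ind_conn_rot_field[where a="\<lambda>_. 1" and b="\<lambda>_. 0" and a'=0 and b'=0 and c=0 and d=1])
  by (auto simp: frame1_eq_rot_field frame2_rot_surface rot_field_def)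

lemma ind_conn_frame2_frame2:
  "fst q \<in> I \<Longrightarrow> ind_conn (rot_surface x z) partial_z (frame2 (rot_surface x z)) (frame2 (rot_surface x z)) q
    = rot_field x z (\<lambda>u. - (deriv x u / x u)) (\<lambda>_. 0) q"
  apply (cases q)
  apply (simp add: rot_field_def)
  apply (subst ind_conn_rot_field[where a="\<lambda>_. 0" and b="\<lambda>_. 1" and a'=0 and b'=0 and c=0 and d=1])
  by (auto simp: frame2_eq_rot_field frame2_rot_surface rot_field_def)

lemma dirderiv_frame1_frame2:
  "s \<in> I \<Longrightarrow> dirderiv (rot_surface x z) (frame1 (rot_surface x z)) (frame2 (rot_surface x z)) (s, t) = 0"
  by (simp add: dirderiv_rot_surface[where W="frame1 (rot_surface x z)", OF _ frame1_rot_surface]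
      pd1_rot_field[where a="\<lambda>_. 0" and b="\<lambda>_. 1" and a'=0 and b'=0, OF _ frame2_eq_rot_field]
      vec_eq_iff forall_3)

lemma dirderiv_frame2_frame1:
  assumes s: "s \<in> I"
  shows "dirderiv (rot_surface x z) (frame2 (rot_surface x z)) (frame1 (rot_surface x z)) (s, t)
    = rot_frame_vec x z 0 (deriv x s / x s) s t"
  using x_pos[OF s]
  by (simp add: dirderiv_rot_surface[where W="frame2 (rot_surface x z)", OF s frame2_rot_surface[OF s]]
      pd2_rot_field[where a="\<lambda>_. 1" and b="\<lambda>_. 0", OF s frame1_eq_rot_field]
      rot_frame_vec_def vec_eq_iff forall_3)

lemma lie_bracket_frame1_frame2:
  "s \<in> I \<Longrightarrow> lie_bracket (rot_surface x z) (frame1 (rot_surface x z)) (frame2 (rot_surface x z)) (s, t)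
    = rot_frame_vec x z 0 (- (deriv x s / x s)) s t"
  by (simp add: lie_bracket_def dirderiv_frame1_frame2 dirderiv_frame2_frame1 rot_frame_vec_def
      vec_eq_iff forall_3)

lemma lie_bracket_frame2_frame1:
  "s \<in> I \<Longrightarrow> lie_bracket (rot_surface x z) (frame2 (rot_surface x z)) (frame1 (rot_surface x z)) (s, t)
    = rot_frame_vec x z 0 (deriv x s / x s) s t"
  by (simp add: lie_bracket_def dirderiv_frame1_frame2 dirderiv_frame2_frame1)

lemma sect_curv_rot_surface:
  assumes s: "s \<in> I"
  shows "sect_curv (rot_surface x z) partial_z (s, t) = profile_curvature s"
proof -
  let ?\<psi> = "rot_surface x z"
  let ?D = "ind_conn ?\<psi> partial_z" and ?e1 = "frame1 ?\<psi>" and ?e2 = "frame2 ?\<psi>"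
  let ?k = "deriv x s / x s" and ?k' = "(deriv (deriv x) s * x s - deriv x s * deriv x s) / (x s)\<^sup>2"
  have "x s \<noteq> 0"
    using x_pos[OF s] by simp
  then have deriv_k: "((\<lambda>u. deriv x u / x u) has_real_derivative ?k') (at s)"
    using has_deriv_deriv_x[OF s] has_deriv_x[OF s]
    by (auto intro!: derivative_eq_intros simp: power2_eq_square)
  have "?D ?e1 (?D ?e2 ?e2) (s, t) = rot_frame_vec x z (- ?k' - ?k * deriv z s) 0 s t"
    by (subst ind_conn_rot_field[OF s ind_conn_frame2_frame2 DERIV_minus[OF deriv_k], where b'=0 and c=1 and d=0])
      (auto simp: frame1_rot_surface[OF s])
  moreover have "?D ?e2 (?D ?e1 ?e2) (s, t) = rot_frame_vec x z 0 0 s t"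
    by (subst ind_conn_rot_field[OF s ind_conn_frame1_frame2, where a'=0 and b'=0 and c=0 and d=1])
      (auto simp: frame2_rot_surface[OF s])
  moreover have "?D (lie_bracket ?\<psi> ?e1 ?e2) ?e2 (s, t) = rot_frame_vec x z (?k * ?k) 0 s t"
    by (subst ind_conn_rot_field[OF s frame2_eq_rot_field, where a'=0 and b'=0 and c=0 and d="- ?k"])
      (auto simp: lie_bracket_frame1_frame2[OF s])
  moreover have "?D ?e2 (?D ?e1 ?e1) (s, t) = rot_frame_vec x z 0 (deriv z s * ?k + (deriv z s)\<^sup>2) s t"
    by (subst ind_conn_rot_field[OF s ind_conn_frame1_frame1 has_deriv_deriv_z[OF s], where b'=0 and c=0 and d=1])
      (auto simp: frame2_rot_surface[OF s] power2_eq_square)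
  moreover have "?D ?e1 (?D ?e2 ?e1) (s, t) = rot_frame_vec x z 0 (?k' + deriv (deriv z) s) s t"
    by (subst ind_conn_rot_field[OF s ind_conn_frame2_frame1 _ DERIV_add[OF deriv_k has_deriv_deriv_z[OF s]],
          where a'=0 and c=1 and d=0])
      (auto simp: frame1_rot_surface[OF s])
  moreover have "?D (lie_bracket ?\<psi> ?e2 ?e1) ?e1 (s, t) = rot_frame_vec x z 0 (?k * ?k + deriv z s * ?k) s t"
    by (subst ind_conn_rot_field[OF s frame1_eq_rot_field, where a'=0 and b'=0 and c=0 and d="?k"])
      (auto simp: lie_bracket_frame2_frame1[OF s])
  ultimately show ?thesis
    using \<open>x s \<noteq> 0\<close>
    by (simp add: sect_curv_def ind_curv_def diff_rot_frame_vec frame1_rot_surface[OF s]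
        frame2_rot_surface[OF s] inner_rot_frame_vec[OF s] profile_curvature_def field_simps power2_eq_square)
qed

lemma profile_curvature_if_2z'_eq_xx':
  assumes z': "\<And>s. s \<in> I \<Longrightarrow> 2 * deriv z s = x s * deriv x s" and s: "s \<in> I"
  shows "deriv x s \<noteq> 0" and "profile_curvature s = 1/2 - 3 / (4 + (x s)\<^sup>2)"
proof -
  have z'': "2 * deriv (deriv z) s = (deriv x s)\<^sup>2 + x s * deriv (deriv x) s"
  proof (rule has_real_derivative_unique_on_open[OF open_I s z'])
    show "((\<lambda>u. 2 * deriv z u) has_real_derivative 2 * deriv (deriv z) s) (at s)"
      using has_deriv_deriv_z[OF s] by (auto intro!: derivative_eq_intros)
    show "((\<lambda>u. x u * deriv x u) has_real_derivative (deriv x s)\<^sup>2 + x s * deriv (deriv x) s) (at s)"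
      using has_deriv_x[OF s] has_deriv_deriv_x[OF s]
      by (auto intro!: derivative_eq_intros simp: power2_eq_square)
  qed
  have x'_sq: "(deriv x s)\<^sup>2 * (4 + (x s)\<^sup>2) = 4"
    using unit_speed[OF s] z'[OF s] by algebra
  then show x'_ne: "deriv x s \<noteq> 0"
    by auto
  have "deriv x s * (deriv (deriv x) s * (4 + (x s)\<^sup>2) + x s * (deriv x s)\<^sup>2) = 0"
    using unit_speed_deriv[OF s] z'[OF s] z'' by algebra
  then have x'': "deriv (deriv x) s * (4 + (x s)\<^sup>2) = - x s * (deriv x s)\<^sup>2"
    using x'_ne by simp
  have "4 + (x s)\<^sup>2 > 0" and "x s > 0"
    using x_pos[OF s] by (auto intro: add_pos_nonneg)
  then show "profile_curvature s = 1/2 - 3 / (4 + (x s)\<^sup>2)"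
    using z'[OF s] z'' x'' x'_sq
    apply (simp add: profile_curvature_def field_simps)
    by algebra
qed

lemma profile_curvature_nonconstant_if_2z'_eq_xx':
  assumes s0: "s0 \<in> I" and z': "\<And>s. s \<in> I \<Longrightarrow> 2 * deriv z s = x s * deriv x s"
    and K: "\<And>s. s \<in> I \<Longrightarrow> profile_curvature s = c"
  shows False
proof -
  have c_linear: "(1 - 2 * c) * (4 + (x s)\<^sup>2) = 6" if s: "s \<in> I" for s
    using K[OF s] profile_curvature_if_2z'_eq_xx'(2)[OF z' s] by (simp add: field_simps add_nonneg_eq_0_iff)
  have "(1 - 2 * c) * (2 * x s0 * deriv x s0) = 0"
  proof (rule has_real_derivative_unique_on_open[OF open_I s0 c_linear])
    show "((\<lambda>u. (1 - 2 * c) * (4 + (x u)\<^sup>2)) has_real_derivative (1 - 2 * c) * (2 * x s0 * deriv x s0)) (at s0)"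
      using has_deriv_x[OF s0] by (auto intro!: derivative_eq_intros)
  qed (auto intro: DERIV_const)
  then have "1 - 2 * c = 0"
    using x_pos[OF s0] profile_curvature_if_2z'_eq_xx'(1)[OF z' s0] by simp
  then show False
    using c_linear[OF s0] by simp
qed

lemma profile_curvature_if_xz'_eq_x':
  assumes z': "\<And>s. s \<in> I \<Longrightarrow> x s * deriv z s = deriv x s" and s: "s \<in> I"
  shows "deriv x s \<noteq> 0" and "profile_curvature s = ((x s)\<^sup>2 - 2) / (2 * (1 + (x s)\<^sup>2)\<^sup>2)"
proof -
  define q where "q = 1 + (x s)\<^sup>2"
  have X: "x s \<noteq> 0" "q \<noteq> 0"
    using x_pos[OF s] by (auto simp: q_def add_nonneg_eq_0_iff)
  have z'': "deriv x s * deriv z s + x s * deriv (deriv z) s = deriv (deriv x) s"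
  proof (rule has_real_derivative_unique_on_open[OF open_I s z'])
    show "((\<lambda>u. x u * deriv z u) has_real_derivative deriv x s * deriv z s + x s * deriv (deriv z) s) (at s)"
      using has_deriv_x[OF s] has_deriv_deriv_z[OF s] by (auto intro!: derivative_eq_intros)
    show "(deriv x has_real_derivative deriv (deriv x) s) (at s)"
      using has_deriv_deriv_x[OF s] .
  qed
  have x'_sq: "(deriv x s)\<^sup>2 * q = (x s)\<^sup>2"
    unfolding q_def using unit_speed[OF s] z'[OF s] by algebra
  then show x'_ne: "deriv x s \<noteq> 0"
    using X by auto
  have "deriv x s * (deriv (deriv x) s * x s * q - (deriv x s)\<^sup>2) = 0"
    unfolding q_def using unit_speed_deriv[OF s] z'[OF s] z'' x'_sq[unfolded q_def] by algebra
  then have x'': "deriv (deriv x) s * x s * q = (deriv x s)\<^sup>2"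
    using x'_ne by simp
  have z'_eq: "deriv z s = deriv x s / x s"
    using z'[OF s] X by (simp add: field_simps)
  have z''_eq: "deriv (deriv z) s = (deriv (deriv x) s - (deriv x s)\<^sup>2 / x s) / x s"
    using z'' X by (simp add: z'_eq field_simps power2_eq_square)
  have x'_sq_eq: "(deriv x s)\<^sup>2 = (x s)\<^sup>2 / q"
    using x'_sq X by (simp add: field_simps)
  have "x s * (deriv (deriv x) s * q\<^sup>2) = x s * x s"
    using x'' X unfolding x'_sq_eq by (simp add: field_simps power2_eq_square)
  then have x''_eq: "deriv (deriv x) s = x s / q\<^sup>2"
    using X by (simp add: eq_divide_eq)
  have "profile_curvature s = (deriv x s)\<^sup>2 / (2 * (x s)\<^sup>2) - 3 * deriv (deriv x) s / (2 * x s)"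
    using X by (simp add: profile_curvature_def z'_eq z''_eq field_simps power2_eq_square)
  also have "\<dots> = (q - 3) / (2 * q\<^sup>2)"
    unfolding x'_sq_eq x''_eq using X by (simp add: field_simps power2_eq_square)
  finally show "profile_curvature s = ((x s)\<^sup>2 - 2) / (2 * (1 + (x s)\<^sup>2)\<^sup>2)"
    by (simp add: q_def)
qed

lemma profile_curvature_nonconstant_if_xz'_eq_x':
  assumes s0: "s0 \<in> I" and z': "\<And>s. s \<in> I \<Longrightarrow> x s * deriv z s = deriv x s"
    and K: "\<And>s. s \<in> I \<Longrightarrow> profile_curvature s = c"
  shows False
proof -
  have x'_ne: "deriv x s \<noteq> 0" if "s \<in> I" for s
    using profile_curvature_if_xz'_eq_x'(1)[OF z' that] .
  have c_quadratic: "2 * c * (1 + (x s)\<^sup>2)\<^sup>2 = (x s)\<^sup>2 - 2" if s: "s \<in> I" for s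
    using K[OF s] profile_curvature_if_xz'_eq_x'(2)[OF z' s] by (simp add: field_simps add_nonneg_eq_0_iff)
  have c_linear: "4 * c * (1 + (x s)\<^sup>2) = 1" if s: "s \<in> I" for s
  proof -
    have "4 * c * (1 + (x s)\<^sup>2) * (2 * x s * deriv x s) = 2 * x s * deriv x s"
    proof (rule has_real_derivative_unique_on_open[OF open_I s c_quadratic])
      show "((\<lambda>u. 2 * c * (1 + (x u)\<^sup>2)\<^sup>2) has_real_derivative
          4 * c * (1 + (x s)\<^sup>2) * (2 * x s * deriv x s)) (at s)"
        using has_deriv_x[OF s] by (auto intro!: derivative_eq_intros simp: algebra_simps)
      show "((\<lambda>u. (x u)\<^sup>2 - 2) has_real_derivative 2 * x s * deriv x s) (at s)"
        using has_deriv_x[OF s] by (auto intro!: derivative_eq_intros)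
    qed
    then show ?thesis
      using x_pos[OF s] x'_ne[OF s] by simp
  qed
  have "4 * c * (2 * x s0 * deriv x s0) = 0"
  proof (rule has_real_derivative_unique_on_open[OF open_I s0 c_linear])
    show "((\<lambda>u. 4 * c * (1 + (x u)\<^sup>2)) has_real_derivative 4 * c * (2 * x s0 * deriv x s0)) (at s0)"
      using has_deriv_x[OF s0] by (auto intro!: derivative_eq_intros)
  qed (auto intro: DERIV_const)
  then have "c = 0"
    using x_pos[OF s0] x'_ne[OF s0] by simp
  then show False
    using c_linear[OF s0] by simp
qed

end

theorem proposition4p2:
  fixes x z :: "real \<Rightarrow> real" and I :: "real set"
  assumes "open I" and "is_interval I" and "I \<noteq> {}"
    and "\<And>n s. s \<in> I \<Longrightarrow> ((deriv ^^ n) x) differentiable (at s)"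
    and "\<And>n s. s \<in> I \<Longrightarrow> ((deriv ^^ n) z) differentiable (at s)"
    and "\<And>s. s \<in> I \<Longrightarrow> x s > 0"
    and "\<And>s. s \<in> I \<Longrightarrow> (deriv x s)\<^sup>2 + (deriv z s)\<^sup>2 = 1"
    and "\<exists>c. \<forall>s\<in>I. \<forall>t. sect_curv (rot_surface x z) partial_z (s, t) = c"
  shows "\<not> (\<forall>s\<in>I. 2 * deriv z s - x s * deriv x s = 0)
       \<and> \<not> (\<forall>s\<in>I. x s * deriv z s - deriv x s = 0)"
proof -
  interpret unit_speed_profile x z I
    using assms(1,4-7) by unfold_locales
  obtain c where "\<forall>s\<in>I. \<forall>t. sect_curv (rot_surface x z) partial_z (s, t) = c"
    using assms(8) by blast
  then have K: "\<And>s. s \<in> I \<Longrightarrow> profile_curvature s = c"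
    by (simp add: sect_curv_rot_surface)
  obtain s0 where s0: "s0 \<in> I"
    using assms(3) by blast
  show ?thesis
    using profile_curvature_nonconstant_if_2z'_eq_xx'[OF s0 _ K]
      profile_curvature_nonconstant_if_xz'_eq_x'[OF s0 _ K]
    by auto
qed

end
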